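(* The center of a generalized weakly Rickart $*$-ring is a generalized weakly Rickart $*$-ring.
   Context: A $*$-ring is an associative ring $R$ with an involution $x\mapsto x^*$ (additive, $(xy)^*=y^*x^*$, $x^{**}=x$). A projection is an element $e$ with $e=e^*=e^2$. In a $*$-ring $S$, a projection $e\in S$ is a generalized right projection of $x\in S$ if there exists $n\in\mathbb N$ with $x^ne=x^n$ and, for all $y\in S$, $x^ny=0$ implies $ey=0$. $S$ is a generalized weakly Rickart $*$-ring if every element of $S$ has a generalized right projection in $S$. The center $C(R)=\{c\in R: cr=rc\ \forall r\in R\}$ is a $*$-subring. *)

theory Defs
  imports Main
begin

text \<open>Associative (not necessarily unital) rings are modelled by the type class ring.
  An involution is given as an explicit function.\<close>

definition star_ring :: "('a::ring \<Rightarrow> 'a) \<Rightarrow> bool" where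
  "star_ring st \<longleftrightarrow>
     (\<forall>x y. st (x + y) = st x + st y) \<and>
     (\<forall>x y. st (x * y) = st y * st x) \<and>
     (\<forall>x. st (st x) = x)"

text \<open>Positive powers x^n for n >= 1 in a possibly non-unital ring (value at 0 is junk).\<close>
fun rpow :: "'a::ring \<Rightarrow> nat \<Rightarrow> 'a" where
  "rpow x 0 = x"
| "rpow x (Suc 0) = x"
| "rpow x (Suc (Suc n)) = x * rpow x (Suc n)"

definition star_subring :: "('a::ring \<Rightarrow> 'a) \<Rightarrow> 'a set \<Rightarrow> bool" where
  "star_subring st S \<longleftrightarrow> 0 \<in> S \<and> (\<forall>x\<in>S. \<forall>y\<in>S. x + y \<in> S \<and> x * y \<in> S) \<and>
     (\<forall>x\<in>S. - x \<in> S \<and> st x \<in> S)"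

definition is_projection :: "('a::ring \<Rightarrow> 'a) \<Rightarrow> 'a \<Rightarrow> bool" where
  "is_projection st e \<longleftrightarrow> e = st e \<and> e = e * e"

definition gen_right_proj :: "('a::ring \<Rightarrow> 'a) \<Rightarrow> 'a set \<Rightarrow> 'a \<Rightarrow> 'a \<Rightarrow> bool" where
  "gen_right_proj st S x e \<longleftrightarrow> e \<in> S \<and> is_projection st e \<and>
     (\<exists>n::nat. n \<ge> 1 \<and> rpow x n * e = rpow x n \<and>
        (\<forall>y\<in>S. rpow x n * y = 0 \<longrightarrow> e * y = 0))"

definition gen_weakly_rickart :: "('a::ring \<Rightarrow> 'a) \<Rightarrow> 'a set \<Rightarrow> bool" where
  "gen_weakly_rickart st S \<longleftrightarrow> star_subring st S \<and>
     (\<forall>x\<in>S. \<exists>e. gen_right_proj st S x e)"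

definition center :: "'a::ring set" where
  "center = {c. \<forall>r. c * r = r * c}"

end

theory Submission
  imports Defs
begin

text \<open>If x is central with generalized right projection e, say x^n e = x^n, then x^n (r - r e) = 0
  for every r, so e r = e r e. Applying the involution gives r e = e r e, hence e is central,
  and e is a generalized right projection of x in the center as well.\<close>

lemma mem_centerI: "(\<And>r. c * r = r * c) \<Longrightarrow> c \<in> center"
  by (simp add: center_def)

lemma mem_centerD: "c \<in> center \<Longrightarrow> c * r = r * c"
  by (simp add: center_def)

lemma add_mem_center: "a \<in> center \<Longrightarrow> b \<in> center \<Longrightarrow> a + b \<in> center"
  by (simp add: center_def distrib_left distrib_right)

lemma mult_mem_center:
  assumes "a \<in> center" and "b \<in> center"
  shows "a * b \<in> center"
proof (rule mem_centerI)
  fix r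
  have "a * b * r = (a * r) * b" by (simp add: mult.assoc mem_centerD[OF assms(2), of r])
  also have "\<dots> = r * (a * b)" by (simp add: mem_centerD[OF assms(1), of r] mult.assoc)
  finally show "a * b * r = r * (a * b)" .
qed

lemma uminus_mem_center: "a \<in> center \<Longrightarrow> - a \<in> center"
  by (simp add: center_def)

lemma star_mem_center:
  assumes "star_ring st" and "c \<in> center"
  shows "st c \<in> center"
proof (rule mem_centerI)
  fix r
  have mul: "st (x * y) = st y * st x" and inv: "st (st x) = x" for x y
    using assms(1) unfolding star_ring_def by auto
  have "st c * r = st (st r * c)" by (simp add: mul inv)
  also have "\<dots> = st (c * st r)" by (simp add: mem_centerD[OF assms(2)])
  also have "\<dots> = r * st c" by (simp add: mul inv)
  finally show "st c * r = r * st c" .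
qed

lemma star_subring_center: "star_ring st \<Longrightarrow> star_subring st center"
  unfolding star_subring_def
  by (simp add: add_mem_center mult_mem_center uminus_mem_center star_mem_center)
    (simp add: center_def)

lemma rpow_mem_center: "x \<in> center \<Longrightarrow> rpow x n \<in> center"
  by (induction x n rule: rpow.induct) (simp_all add: mult_mem_center)

lemma corner_absorbs_if_annihilator_dominated:
  assumes "a \<in> center" and "a * e = a" and "\<And>y. a * y = 0 \<Longrightarrow> e * y = 0"
  shows "e * r * e = e * r"
proof -
  have "a * (r - r * e) = a * r - (a * r) * e"
    by (simp add: right_diff_distrib mult.assoc)
  also have "\<dots> = r * a - r * (a * e)"
    by (simp add: mem_centerD[OF assms(1)] mult.assoc)
  also have "\<dots> = 0" by (simp add: assms(2))
  finally have "e * (r - r * e) = 0" by (rule assms(3))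
  then have "e * r - e * r * e = 0" by (simp only: right_diff_distrib mult.assoc)
  then show ?thesis by simp
qed

lemma projection_central_if_corner_absorbs:
  assumes "star_ring st" and "is_projection st e" and "\<And>r. e * r * e = e * r"
  shows "e \<in> center"
proof (rule mem_centerI)
  fix r
  have mul: "st (x * y) = st y * st x" and inv: "st (st x) = x" for x y
    using assms(1) unfolding star_ring_def by auto
  have se: "st e = e" using assms(2) unfolding is_projection_def by simp
  have "r * e = st (e * st r)" by (simp add: mul inv se)
  also have "\<dots> = st (e * st r * e)" by (simp add: assms(3))
  also have "\<dots> = e * r * e" by (simp add: mul inv se mult.assoc)
  finally show "e * r = r * e" by (simp add: assms(3))
qed

lemma gen_right_proj_center:
  assumes "star_ring st" and "x \<in> center" and "gen_right_proj st UNIV x e"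
  shows "gen_right_proj st center x e"
proof -
  obtain n where proj: "is_projection st e" and "n \<ge> 1" and xe: "rpow x n * e = rpow x n"
    and ann: "\<And>y. rpow x n * y = 0 \<Longrightarrow> e * y = 0"
    using assms(3) unfolding gen_right_proj_def by blast
  have "e * r * e = e * r" for r
    using rpow_mem_center[OF assms(2)] xe ann by (rule corner_absorbs_if_annihilator_dominated)
  then have "e \<in> center"
    by (rule projection_central_if_corner_absorbs[OF assms(1) proj])
  with proj \<open>n \<ge> 1\<close> xe ann show ?thesis
    unfolding gen_right_proj_def by blast
qed

theorem mainTheorem9:
  fixes st :: "'a::ring \<Rightarrow> 'a"
  assumes "star_ring st"
    and "gen_weakly_rickart st (UNIV :: 'a set)"
  shows "gen_weakly_rickart st (center :: 'a set)"
  using assms star_subring_center gen_right_proj_center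
  unfolding gen_weakly_rickart_def by blast

end
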